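(* Let $a\neq 0$ be a real number. On the space $C^\infty((0,\infty))$ of smooth functions of a real variable $x>0$, with $D=\frac{d}{dx}$ and functions of $x$ acting by multiplication, define the linear operators $$B_+=x^2,\quad M=1,\quad N=\frac{e^{2ax^2}-1}{2ax}\,D,\quad A_+=\Big(\frac{1-e^{-2ax^2}}{2a}\Big)^{1/2},\quad A_-=\frac{e^{2ax^2}}{x}\Big(\frac{1-e^{-2ax^2}}{2a}\Big)^{1/2}D,$$ $$B_-=\frac{e^{2ax^2}-1}{2ax^2}\,D^2+\Big(\frac{e^{2ax^2}}{x}+\frac{1-e^{2ax^2}}{2ax^3}\Big)D .$$ Then these operators satisfy the commutation relations $[N,A_+]=A_+$, $[N,A_-]=-A_-$, $[A_-,A_+]=M$, $[N,B_+]=\frac{e^{2aB_+}-1}{a}$, $[N,B_-]=-2B_--4aN^2$, $[B_-,B_+]=4N+2Me^{2aB_+}$, $[A_+,B_-]=-2A_-+2a(NA_++A_+N)$, $[A_+,B_+]=0$, $[A_-,B_+]=2e^{2aB_+}A_+$, $[A_-,B_-]=-2a(NA_-+A_-N)$, and $[M,X]=0$ for each of these operators $X$.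
   Context: $[X,Y]=XY-YX$ denotes the commutator of operators, and $e^{cB_+}$ is the operator of multiplication by $e^{cx^2}$. For $a\neq 0$ real and $x>0$, $(1-e^{-2ax^2})/(2a)>0$, and the square root is the positive one. These relations are the commutation rules of the non-standard quantum two-photon algebra $U_{a}(h_6)$ containing a quantum $gl(2)$ subalgebra. *)

theory Defs
  imports "HOL-Analysis.Analysis"
begin

text \<open>Linear operators on real functions; only values at x > 0 matter.\<close>
type_synonym rop = "(real \<Rightarrow> real) \<Rightarrow> (real \<Rightarrow> real)"

definition smooth_on :: "real set \<Rightarrow> (real \<Rightarrow> real) \<Rightarrow> bool" where
  "smooth_on S f \<longleftrightarrow> (\<forall>n. \<forall>x\<in>S. ((deriv ^^ n) f) differentiable (at x))"

definition commutator :: "rop \<Rightarrow> rop \<Rightarrow> rop" where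
  "commutator X Y f = (\<lambda>x. X (Y f) x - Y (X f) x)"

definition Bp :: rop where "Bp f = (\<lambda>x. x^2 * f x)"

definition Mop :: rop where "Mop f = (\<lambda>x. f x)"

text \<open>the operator e^(c B_+): multiplication by exp(c x^2)\<close>
definition expBp :: "real \<Rightarrow> rop" where "expBp c f = (\<lambda>x. exp (c * x^2) * f x)"

definition Nop :: "real \<Rightarrow> rop" where
  "Nop a f = (\<lambda>x. (exp (2*a*x^2) - 1) / (2*a*x) * deriv f x)"

definition Ap :: "real \<Rightarrow> rop" where
  "Ap a f = (\<lambda>x. sqrt ((1 - exp (-2*a*x^2)) / (2*a)) * f x)"

definition Am :: "real \<Rightarrow> rop" where
  "Am a f = (\<lambda>x. exp (2*a*x^2) / x * sqrt ((1 - exp (-2*a*x^2)) / (2*a)) * deriv f x)"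

definition Bm :: "real \<Rightarrow> rop" where
  "Bm a f = (\<lambda>x. (exp (2*a*x^2) - 1) / (2*a*x^2) * deriv (deriv f) x
     + (exp (2*a*x^2) / x + (1 - exp (2*a*x^2)) / (2*a*x^3)) * deriv f x)"

end

theory Submission
  imports Defs
begin

(* Write s = Ap_coeff a x = sqrt ((1 - exp (-2 a x^2)) / (2 a)), the function by which A_+
   multiplies. Since ds/dx = x exp (-2 a x^2) / s, the operator A_- is d/ds, a derivation with
   A_- s = 1, and in terms of it N = s A_- and B_- = (1 - 2 a s^2) A_-^2 - 2 a s A_-; moreover
   exp (2 a x^2) (1 - 2 a s^2) = 1 and A_- x^2 = 2 exp (2 a x^2) s. Each relation is then a short
   computation with the Leibniz rule for A_-, carried out pointwise on functions of x, so no
   change of variables is ever performed. *)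

definition Ap_coeff :: "real \<Rightarrow> real \<Rightarrow> real" where
  "Ap_coeff a y = sqrt ((1 - exp (-2*a*y^2)) / (2*a))"

definition Am_coeff :: "real \<Rightarrow> real \<Rightarrow> real" where
  "Am_coeff a y = exp (2*a*y^2) / y * Ap_coeff a y"

definition Am_coeff_deriv :: "real \<Rightarrow> real \<Rightarrow> real" where
  "Am_coeff_deriv a y =
    4*a*exp (2*a*y^2) * Ap_coeff a y + 1 / Ap_coeff a y - exp (2*a*y^2) * Ap_coeff a y / y^2"

lemma Ap_coeff_radicand_pos:
  fixes a y :: real
  assumes "a \<noteq> 0" "y \<noteq> 0"
  shows "(1 - exp (-2*a*y^2)) / (2*a) > 0"
proof (cases "a > 0")
  case True
  with assms show ?thesis by (simp add: divide_pos_pos)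
next
  case False
  with assms have "a < 0" by simp
  with assms show ?thesis by (simp add: divide_neg_neg mult_neg_pos)
qed

lemma Ap_coeff_pos: "a \<noteq> 0 \<Longrightarrow> y > 0 \<Longrightarrow> Ap_coeff a y > 0"
  using Ap_coeff_radicand_pos by (simp add: Ap_coeff_def)

lemma exp_mult_one_minus_Ap_coeff_sq:
  assumes "a \<noteq> 0"
  shows "exp (2*a*y^2) * (1 - 2*a*(Ap_coeff a y)^2) = 1"
proof (cases "y = 0")
  case False
  then have "1 - 2*a*(Ap_coeff a y)^2 = exp (-2*a*y^2)"
    using Ap_coeff_radicand_pos[OF assms False] assms by (simp add: Ap_coeff_def)
  then show ?thesis using exp_add[of "2*a*y^2" "-2*a*y^2"] by simp
next
  case True
  have "Ap_coeff a 0 = 0"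
    by (simp add: Ap_coeff_def)
  with True show ?thesis by simp
qed

lemma Ap_coeff_has_real_derivative:
  assumes a: "a \<noteq> 0" and y: "y > 0"
  shows "(Ap_coeff a has_real_derivative 1 / Am_coeff a y) (at y)"
proof -
  \<comment> \<open>kept abstract: the simplifier diverges on \<open>exp (-2*a*y^2)\<close> divided by \<open>2*a\<close>\<close>
  define e where "e = exp (-2*a*y^2)"
  have "((\<lambda>z. (1 - exp (-2*a*z^2)) / (2*a))
      has_real_derivative - (e * (-2*a*(2*y))) / (2*a)) (at y)"
    unfolding e_def by (intro DERIV_cdivide) (auto intro!: derivative_eq_intros)
  then have "((\<lambda>z. (1 - exp (-2*a*z^2)) / (2*a)) has_real_derivative 2*y*e) (at y)"
    using a by (simp add: ac_simps)
  from DERIV_chain2[OF DERIV_real_sqrt[OF Ap_coeff_radicand_pos] this] a y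
  have "(Ap_coeff a has_real_derivative inverse (Ap_coeff a y) / 2 * (2*y*e)) (at y)"
    unfolding Ap_coeff_def[abs_def] by simp
  moreover have "inverse (Ap_coeff a y) / 2 * (2*y*e) = 1 / Am_coeff a y"
  proof -
    have "e * exp (2*a*y^2) = 1"
      unfolding e_def using exp_add[of "-2*a*y^2" "2*a*y^2"] by simp
    then show ?thesis
      using Ap_coeff_pos[OF a y] y by (simp add: Am_coeff_def field_simps)
  qed
  ultimately show ?thesis by simp
qed

lemma Ap_coeff_differentiable: "a \<noteq> 0 \<Longrightarrow> y > 0 \<Longrightarrow> Ap_coeff a differentiable at y"
  unfolding real_differentiable_def by (blast intro: Ap_coeff_has_real_derivative)

lemma exp_sq_differentiable: "(\<lambda>z. exp (c*z^2)) differentiable at (y::real)"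
  unfolding real_differentiable_def
  by (rule exI[where x="2*c*y*exp (c*y^2)"]) (auto intro!: derivative_eq_intros)

lemma Am_coeff_pos: "a \<noteq> 0 \<Longrightarrow> y > 0 \<Longrightarrow> Am_coeff a y > 0"
  by (simp add: Am_coeff_def Ap_coeff_pos)

lemma Am_coeff_has_real_derivative:
  assumes "a \<noteq> 0" "y > 0"
  shows "(Am_coeff a has_real_derivative Am_coeff_deriv a y) (at y)"
  unfolding Am_coeff_def[abs_def] Am_coeff_deriv_def using assms Ap_coeff_pos[OF assms]
  by (auto intro!: derivative_eq_intros Ap_coeff_has_real_derivative
      simp: Am_coeff_def field_simps power2_eq_square)

lemma Am_coeff_differentiable: "a \<noteq> 0 \<Longrightarrow> y > 0 \<Longrightarrow> Am_coeff a differentiable at y"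
  unfolding real_differentiable_def by (blast intro: Am_coeff_has_real_derivative)

lemma Am_coeff_deriv_differentiable:
  assumes "a \<noteq> 0" "y > 0"
  shows "Am_coeff_deriv a differentiable at y"
  unfolding Am_coeff_deriv_def[abs_def]
  using assms Ap_coeff_pos[OF assms] Ap_coeff_differentiable[OF assms] exp_sq_differentiable
  by simp

lemma Am_eq: "Am a g y = Am_coeff a y * deriv g y"
  by (simp add: Am_def Am_coeff_def Ap_coeff_def)

lemma Ap_eq: "Ap a g = (\<lambda>y. Ap_coeff a y * g y)"
  by (simp add: Ap_def Ap_coeff_def fun_eq_iff)

(* An identity of operators: at y = 0 both sides vanish by division by zero. *)
lemma Nop_eq:
  assumes "a \<noteq> 0"
  shows "Nop a g = (\<lambda>y. Ap_coeff a y * Am a g y)"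
proof
  fix y :: real
  define E c where "E = exp (2*a*y^2)" and "c = Ap_coeff a y"
  have "E * (1 - 2*a*c^2) = 1"
    unfolding E_def c_def by (rule exp_mult_one_minus_Ap_coeff_sq[OF assms])
  then have "(E - 1) / (2*a*y) = c * (E / y * c)"
    using assms by (cases "y = 0") (simp_all add: field_simps power2_eq_square, algebra)
  then show "Nop a g y = Ap_coeff a y * Am a g y"
    unfolding Nop_def Am_eq Am_coeff_def E_def[symmetric] c_def[symmetric]
    by (simp only: mult.assoc)
qed

lemma eventually_nhds_pos: "y > (0::real) \<Longrightarrow> \<forall>z>0. P z \<Longrightarrow> eventually P (nhds y)"
  using eventually_nhds_in_open[of "{0<..}" y] by (auto elim: eventually_mono)

lemma differentiable_cong_pos:
  fixes g h :: "real \<Rightarrow> real"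
  assumes "y > 0" "\<forall>z>0. g z = h z" "g differentiable at y"
  shows "h differentiable at y"
  using assms DERIV_cong_ev[OF refl eventually_nhds_pos[OF assms(1,2)] refl]
  by (auto simp: real_differentiable_def)

lemma Am_cong:
  assumes "y > 0" "\<forall>z>0. g z = h z"
  shows "Am a g y = Am a h y"
  using deriv_cong_ev[OF eventually_nhds_pos[OF assms] refl] by (simp add: Am_eq)

lemma Am_const: "Am a (\<lambda>z. c) y = 0"
  by (simp add: Am_eq)

lemma Am_add:
  assumes "g differentiable at y" "h differentiable at y"
  shows "Am a (\<lambda>z. g z + h z) y = Am a g y + Am a h y"
proof -
  have "deriv (\<lambda>z. g z + h z) y = deriv g y + deriv h y"
    using assms unfolding DERIV_deriv_iff_real_differentiable[symmetric]
    by (auto intro!: DERIV_imp_deriv derivative_eq_intros)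
  then show ?thesis by (simp add: Am_eq distrib_left)
qed

lemma Am_diff:
  assumes "g differentiable at y" "h differentiable at y"
  shows "Am a (\<lambda>z. g z - h z) y = Am a g y - Am a h y"
proof -
  have "deriv (\<lambda>z. g z - h z) y = deriv g y - deriv h y"
    using assms unfolding DERIV_deriv_iff_real_differentiable[symmetric]
    by (auto intro!: DERIV_imp_deriv derivative_eq_intros)
  then show ?thesis by (simp add: Am_eq right_diff_distrib)
qed

lemma Am_mult:
  assumes "g differentiable at y" "h differentiable at y"
  shows "Am a (\<lambda>z. g z * h z) y = Am a g y * h y + g y * Am a h y"
proof -
  have "deriv (\<lambda>z. g z * h z) y = deriv g y * h y + g y * deriv h y"
    using assms unfolding DERIV_deriv_iff_real_differentiable[symmetric]
    by (auto intro!: DERIV_imp_deriv derivative_eq_intros)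
  then show ?thesis by (simp add: Am_eq algebra_simps)
qed

lemma Am_power:
  assumes "g differentiable at y"
  shows "Am a (\<lambda>z. g z ^ n) y = of_nat n * g y ^ (n - 1) * Am a g y"
proof -
  have "deriv (\<lambda>z. g z ^ n) y = of_nat n * g y ^ (n - 1) * deriv g y"
    using assms unfolding DERIV_deriv_iff_real_differentiable[symmetric]
    by (auto intro!: DERIV_imp_deriv derivative_eq_intros)
  then show ?thesis by (simp add: Am_eq)
qed

lemma Am_Ap_coeff:
  assumes "a \<noteq> 0" "y > 0"
  shows "Am a (Ap_coeff a) y = 1"
  using DERIV_imp_deriv[OF Ap_coeff_has_real_derivative[OF assms]] Am_coeff_pos[OF assms]
  by (simp add: Am_eq)

(* At y = 0 both sides vanish: Am_coeff a 0 = 0 because of the division by y. *)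
lemma Am_sq: "Am a (\<lambda>z. z^2) y = 2 * exp (2*a*y^2) * Ap_coeff a y"
proof -
  have "deriv (\<lambda>z. z^2) y = 2 * y"
    by (auto intro!: DERIV_imp_deriv derivative_eq_intros)
  then show ?thesis by (cases "y = 0") (simp_all add: Am_eq Am_coeff_def Ap_coeff_def)
qed

lemma Am_exp_sq: "Am a (\<lambda>z. exp (2*a*z^2)) y = 4*a * Ap_coeff a y * exp (2*a*y^2)^2"
proof -
  have "deriv (\<lambda>z. exp (2*a*z^2)) y = 4*a*y * exp (2*a*y^2)"
    by (auto intro!: DERIV_imp_deriv derivative_eq_intros)
  then show ?thesis
    by (cases "y = 0") (simp_all add: Am_eq Am_coeff_def Ap_coeff_def power2_eq_square)
qed

lemma Am_differentiable:
  assumes "a \<noteq> 0" "y > 0" "deriv g differentiable at y"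
  shows "Am a g differentiable at y"
proof -
  have "Am a g = (\<lambda>z. Am_coeff a z * deriv g z)"
    by (simp add: Am_eq fun_eq_iff)
  moreover have "(\<lambda>z. Am_coeff a z * deriv g z) differentiable at y"
    using assms Am_coeff_differentiable[OF assms(1,2)] by (intro differentiable_mult)
  ultimately show ?thesis by (simp only:)
qed

lemma Am_Am_differentiable:
  assumes a: "a \<noteq> 0" and y: "y > 0"
    and dg: "\<forall>z>0. deriv g differentiable at z" and ddg: "deriv (deriv g) differentiable at y"
  shows "Am a (Am a g) differentiable at y"
proof -
  have "\<forall>z>0. Am_coeff_deriv a z * deriv g z + Am_coeff a z * deriv (deriv g) z
      = deriv (Am a g) z"
  proof (intro allI impI)
    fix z :: real
    assume z: "z > 0"
    have "(deriv g has_real_derivative deriv (deriv g) z) (at z)"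
      using dg z DERIV_deriv_iff_real_differentiable by blast
    from DERIV_mult'[OF Am_coeff_has_real_derivative[OF a z] this]
    show "Am_coeff_deriv a z * deriv g z + Am_coeff a z * deriv (deriv g) z = deriv (Am a g) z"
      unfolding Am_eq[abs_def] by (simp add: DERIV_imp_deriv)
  qed
  moreover have "(\<lambda>z. Am_coeff_deriv a z * deriv g z + Am_coeff a z * deriv (deriv g) z)
      differentiable at y"
    using dg ddg y Am_coeff_differentiable[OF a y] Am_coeff_deriv_differentiable[OF a y]
    by (intro differentiable_add differentiable_mult) auto
  ultimately have "deriv (Am a g) differentiable at y"
    by (rule differentiable_cong_pos[OF y])
  then show ?thesis by (rule Am_differentiable[OF a y])
qed

(* The coefficients of D^2 and D in B_-, in the form that gives
   B_- = (1 - 2 a s^2) A_-^2 - 2 a s A_-. *)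
lemma Bm_coefficients:
  assumes a: "a \<noteq> 0" and y: "y > 0"
  shows "(exp (2*a*y^2) - 1) / (2*a*y^2) = (1 - 2*a*(Ap_coeff a y)^2) * (Am_coeff a y)^2"
    and "exp (2*a*y^2) / y + (1 - exp (2*a*y^2)) / (2*a*y^3)
      = ((1 - 2*a*(Ap_coeff a y)^2) * Am_coeff_deriv a y - 2*a*Ap_coeff a y) * Am_coeff a y"
proof -
  define E c where "E = exp (2*a*y^2)" and "c = Ap_coeff a y"
  have "E * (1 - 2*a*c^2) = 1" and "c > 0"
    using exp_mult_one_minus_Ap_coeff_sq[OF a] Ap_coeff_pos[OF a y] by (simp_all add: E_def c_def)
  then have "(E - 1) / (2*a*y^2) = (1 - 2*a*c^2) * (E / y * c)^2"
    and "E / y + (1 - E) / (2*a*y^3)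
      = ((1 - 2*a*c^2) * (4*a*E * c + 1 / c - E * c / y^2) - 2*a*c) * (E / y * c)"
    using a y by (simp_all add: field_simps power2_eq_square power3_eq_cube; algebra)+
  then show "(exp (2*a*y^2) - 1) / (2*a*y^2) = (1 - 2*a*(Ap_coeff a y)^2) * (Am_coeff a y)^2"
    and "exp (2*a*y^2) / y + (1 - exp (2*a*y^2)) / (2*a*y^3)
      = ((1 - 2*a*(Ap_coeff a y)^2) * Am_coeff_deriv a y - 2*a*Ap_coeff a y) * Am_coeff a y"
    by (simp_all add: E_def c_def Am_coeff_def Am_coeff_deriv_def)
qed

lemma Bm_eq:
  assumes a: "a \<noteq> 0" and y: "y > 0"
    and h: "\<forall>z>0. Am a g z = h z" and h_diff: "h differentiable at y"
  shows "Bm a g y = (1 - 2*a*(Ap_coeff a y)^2) * Am a h y - 2*a*Ap_coeff a y * h y"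
proof -
  let ?v = "Am_coeff a"
  have dg: "\<forall>z>0. deriv g z = h z / ?v z"
  proof (intro allI impI)
    fix z :: real
    assume "z > 0"
    with h Am_coeff_pos[OF a this] show "deriv g z = h z / ?v z"
      by (simp add: Am_eq field_simps)
  qed
  then have "deriv (deriv g) y = deriv (\<lambda>z. h z / ?v z) y"
    by (intro deriv_cong_ev eventually_nhds_pos y refl)
  also have "\<dots> = (deriv h y * ?v y - h y * Am_coeff_deriv a y) / (?v y)^2"
    using h_diff Am_coeff_pos[OF a y] unfolding DERIV_deriv_iff_real_differentiable[symmetric]
    by (auto intro!: DERIV_imp_deriv derivative_eq_intros Am_coeff_has_real_derivative a y
        simp: power2_eq_square)
  finally have ddg: "deriv (deriv g) y = (deriv h y * ?v y - h y * Am_coeff_deriv a y) / (?v y)^2" .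
  show ?thesis
    unfolding Bm_def ddg dg[rule_format, OF y] Am_eq Bm_coefficients[OF a y]
    using Am_coeff_pos[OF a y] by (simp add: field_simps power2_eq_square)
qed

lemma Bm_eq_Am:
  assumes "a \<noteq> 0" "y > 0" "Am a g differentiable at y"
  shows "Bm a g y = (1 - 2*a*(Ap_coeff a y)^2) * Am a (Am a g) y - 2*a*Ap_coeff a y * Am a g y"
  using Bm_eq[of a y g "Am a g"] assms by simp

lemma Am_Ap:
  assumes "a \<noteq> 0" "y > 0" "g differentiable at y"
  shows "Am a (Ap a g) y = g y + Ap_coeff a y * Am a g y"
  using assms Ap_coeff_differentiable[OF assms(1,2)] by (simp add: Ap_eq Am_mult Am_Ap_coeff)

lemma Am_Nop:
  assumes "a \<noteq> 0" "y > 0" "Am a g differentiable at y"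
  shows "Am a (Nop a g) y = Am a g y + Ap_coeff a y * Am a (Am a g) y"
  using assms Ap_coeff_differentiable[OF assms(1,2)] by (simp add: Nop_eq Am_mult Am_Ap_coeff)

lemma Am_Bp:
  assumes "g differentiable at y"
  shows "Am a (Bp g) y = 2 * exp (2*a*y^2) * Ap_coeff a y * g y + y^2 * Am a g y"
  using assms by (simp add: Bp_def Am_mult Am_sq)

lemma commutator_Nop_Ap:
  assumes "a \<noteq> 0" "x > 0" "f differentiable at x"
  shows "commutator (Nop a) (Ap a) f x = Ap a f x"
  using Am_Ap[OF assms] by (simp add: commutator_def Nop_eq[OF assms(1)] Ap_eq algebra_simps)

lemma commutator_Am_Ap:
  assumes "a \<noteq> 0" "x > 0" "f differentiable at x"
  shows "commutator (Am a) (Ap a) f x = Mop f x"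
  using Am_Ap[OF assms] by (simp add: commutator_def Mop_def Ap_eq)

lemma commutator_Nop_Am:
  assumes "a \<noteq> 0" "x > 0" "Am a f differentiable at x"
  shows "commutator (Nop a) (Am a) f x = - Am a f x"
  using Am_Nop[OF assms] by (simp add: commutator_def Nop_eq[OF assms(1)])

lemma commutator_Nop_Bp:
  assumes a: "a \<noteq> 0" and "f differentiable at x"
  shows "commutator (Nop a) Bp f x = (expBp (2*a) f x - Mop f x) / a"
proof -
  have "2 * exp (2*a*x^2) * (Ap_coeff a x)^2 = (exp (2*a*x^2) - 1) / a"
    using exp_mult_one_minus_Ap_coeff_sq[OF a, of x] a by (simp add: field_simps)
  then show ?thesis
    using Am_Bp[OF assms(2)]
    by (simp add: commutator_def Nop_eq[OF a] Bp_def expBp_def Mop_def field_simps power2_eq_square)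
qed

lemma commutator_Am_Bp:
  assumes "f differentiable at x"
  shows "commutator (Am a) Bp f x = 2 * expBp (2*a) (Ap a f) x"
  using Am_Bp[OF assms] by (simp add: commutator_def Bp_def expBp_def Ap_eq)

context
  fixes a x :: real and f :: "real \<Rightarrow> real"
  assumes a: "a \<noteq> 0" and x: "x > 0"
    and f_diff: "\<forall>z>0. f differentiable at z"
    and Am_f_diff: "\<forall>z>0. Am a f differentiable at z"
    and Am_Am_f_diff: "Am a (Am a f) differentiable at x"
begin

lemma Am_Bm:
  "Am a (Bm a f) x = (1 - 2*a*(Ap_coeff a x)^2) * Am a (Am a (Am a f)) x
    - 6*a*Ap_coeff a x * Am a (Am a f) x - 2*a * Am a f x"
proof -
  have "Am a (Bm a f) x = Am a (\<lambda>z. (1 - 2*a*(Ap_coeff a z)^2) * Am a (Am a f) z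
      - 2*a*Ap_coeff a z * Am a f z) x"
    using Bm_eq_Am[OF a] Am_f_diff by (intro Am_cong x) auto
  also have "\<dots> = (1 - 2*a*(Ap_coeff a x)^2) * Am a (Am a (Am a f)) x
    - 6*a*Ap_coeff a x * Am a (Am a f) x - 2*a * Am a f x"
    using Ap_coeff_differentiable[OF a x] Am_Am_f_diff Am_f_diff x
    by (simp add: Am_diff Am_mult Am_power Am_Ap_coeff[OF a x] Am_const; simp add: algebra_simps)
  finally show ?thesis .
qed

lemma commutator_Nop_Bm:
  "commutator (Nop a) (Bm a) f x = -2 * Bm a f x - 4*a * Nop a (Nop a f) x"
proof -
  let ?c = "Ap_coeff a x"
  have "Bm a (Nop a f) x = (1 - 2*a*?c^2)
      * Am a (\<lambda>z. Am a f z + Ap_coeff a z * Am a (Am a f) z) x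
      - 2*a*?c * (Am a f x + ?c * Am a (Am a f) x)"
    using Am_Nop[OF a] Am_f_diff Ap_coeff_differentiable[OF a x] Am_Am_f_diff x
    by (intro Bm_eq a x) auto
  also have "\<dots> = (1 - 2*a*?c^2) * (2 * Am a (Am a f) x + ?c * Am a (Am a (Am a f)) x)
      - 2*a*?c * (Am a f x + ?c * Am a (Am a f) x)"
    by (simp add: Am_add Am_mult Am_Ap_coeff[OF a x] x Am_f_diff Am_Am_f_diff
        Ap_coeff_differentiable[OF a x])
  finally have "Bm a (Nop a f) x = (1 - 2*a*?c^2)
      * (2 * Am a (Am a f) x + ?c * Am a (Am a (Am a f)) x)
      - 2*a*?c * (Am a f x + ?c * Am a (Am a f) x)" .
  moreover note Am_Bm Bm_eq_Am[OF a x Am_f_diff[rule_format, OF x]]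
    and Am_Nop[OF a x Am_f_diff[rule_format, OF x]]
  ultimately show ?thesis
    unfolding commutator_def Nop_eq[OF a, of "Bm a f"] Nop_eq[OF a, of "Nop a f"]
    by algebra
qed

lemma commutator_Bm_Bp:
  "commutator (Bm a) Bp f x = 4 * Nop a f x + 2 * Mop (expBp (2*a) f) x"
proof -
  let ?E = "exp (2*a*x^2)" and ?c = "Ap_coeff a x"
  have "Bm a (Bp f) x = (1 - 2*a*?c^2)
      * Am a (\<lambda>z. 2 * exp (2*a*z^2) * Ap_coeff a z * f z + z^2 * Am a f z) x
      - 2*a*?c * (2 * ?E * ?c * f x + x^2 * Am a f x)"
    using Am_Bp f_diff Am_f_diff Ap_coeff_differentiable[OF a x] exp_sq_differentiable x
    by (intro Bm_eq a x) auto
  also have "\<dots> = (1 - 2*a*?c^2) * ((8*a*?c^2*?E^2 + 2*?E) * f x + 4*?E*?c * Am a f x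
      + x^2 * Am a (Am a f) x) - 2*a*?c * (2 * ?E * ?c * f x + x^2 * Am a f x)"
    by (simp add: Am_add Am_mult Am_Ap_coeff[OF a x] Am_exp_sq Am_sq Am_const x f_diff Am_f_diff
        Ap_coeff_differentiable[OF a x] exp_sq_differentiable; algebra)
  finally have "Bm a (Bp f) x = (1 - 2*a*?c^2) * ((8*a*?c^2*?E^2 + 2*?E) * f x
      + 4*?E*?c * Am a f x + x^2 * Am a (Am a f) x)
      - 2*a*?c * (2 * ?E * ?c * f x + x^2 * Am a f x)" .
  moreover have "?E * (1 - 2*a*?c^2) = 1"
    by (rule exp_mult_one_minus_Ap_coeff_sq[OF a])
  moreover note Bm_eq_Am[OF a x Am_f_diff[rule_format, OF x]]
  ultimately show ?thesis
    unfolding commutator_def Nop_eq[OF a] Bp_def[of "Bm a f"] expBp_def Mop_def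
    by algebra
qed

lemma commutator_Ap_Bm:
  "commutator (Ap a) (Bm a) f x = -2 * Am a f x + 2*a * (Nop a (Ap a f) x + Ap a (Nop a f) x)"
proof -
  let ?c = "Ap_coeff a x"
  have "Bm a (Ap a f) x = (1 - 2*a*?c^2) * Am a (\<lambda>z. f z + Ap_coeff a z * Am a f z) x
      - 2*a*?c * (f x + ?c * Am a f x)"
    using Am_Ap[OF a] f_diff Am_f_diff Ap_coeff_differentiable[OF a x] x
    by (intro Bm_eq a x) auto
  also have "\<dots> = (1 - 2*a*?c^2) * (2 * Am a f x + ?c * Am a (Am a f) x)
      - 2*a*?c * (f x + ?c * Am a f x)"
    by (simp add: Am_add Am_mult Am_Ap_coeff[OF a x] x f_diff Am_f_diff
        Ap_coeff_differentiable[OF a x])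
  finally have "Bm a (Ap a f) x = (1 - 2*a*?c^2) * (2 * Am a f x + ?c * Am a (Am a f) x)
      - 2*a*?c * (f x + ?c * Am a f x)" .
  moreover note Bm_eq_Am[OF a x Am_f_diff[rule_format, OF x]]
    and Am_Ap[OF a x f_diff[rule_format, OF x]]
  ultimately show ?thesis
    unfolding commutator_def Nop_eq[OF a] Ap_eq[of a "Bm a f"]
      Ap_eq[of a "\<lambda>y. Ap_coeff a y * Am a f y"]
    by algebra
qed

lemma commutator_Am_Bm:
  "commutator (Am a) (Bm a) f x = -2*a * (Nop a (Am a f) x + Am a (Nop a f) x)"
  using Am_Bm Bm_eq_Am[OF a x Am_Am_f_diff] Am_Nop[OF a x] Am_f_diff x
  by (simp add: commutator_def Nop_eq[OF a] algebra_simps)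

end

theorem mainTheorem5:
  fixes a x :: real and f :: "real \<Rightarrow> real"
  assumes "a \<noteq> 0" and "smooth_on {0<..} f" and "x > 0"
  shows "(commutator (Nop a) (Ap a) f x = Ap a f x) \<and>
      (commutator (Nop a) (Am a) f x = - Am a f x) \<and>
      (commutator (Am a) (Ap a) f x = Mop f x) \<and>
      (commutator (Nop a) Bp f x = (expBp (2*a) f x - Mop f x) / a) \<and>
      (commutator (Nop a) (Bm a) f x = -2 * Bm a f x - 4*a * Nop a (Nop a f) x) \<and>
      (commutator (Bm a) Bp f x = 4 * Nop a f x + 2 * Mop (expBp (2*a) f) x) \<and>
      (commutator (Ap a) (Bm a) f x = -2 * Am a f x + 2*a * (Nop a (Ap a f) x + Ap a (Nop a f) x)) \<and>
      (commutator (Ap a) Bp f x = 0) \<and>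
      (commutator (Am a) Bp f x = 2 * expBp (2*a) (Ap a f) x) \<and>
      (commutator (Am a) (Bm a) f x = -2*a * (Nop a (Am a f) x + Am a (Nop a f) x)) \<and>
      (commutator Mop (Nop a) f x = 0) \<and>
      (commutator Mop (Ap a) f x = 0) \<and>
      (commutator Mop (Am a) f x = 0) \<and>
      (commutator Mop Bp f x = 0) \<and>
      (commutator Mop (Bm a) f x = 0) \<and>
      (commutator Mop Mop f x = 0)"
proof -
  note a = \<open>a \<noteq> 0\<close> and x = \<open>x > 0\<close>
  have smooth: "\<forall>z>0. (deriv ^^ n) f differentiable at z" for n
    using \<open>smooth_on {0<..} f\<close> by (simp add: smooth_on_def)
  have f_diff: "\<forall>z>0. f differentiable at z"
    and df_diff: "\<forall>z>0. deriv f differentiable at z"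
    and ddf_diff: "\<forall>z>0. deriv (deriv f) differentiable at z"
    using smooth[of 0] smooth[of 1] smooth[of 2] by (simp_all add: numeral_2_eq_2)
  have Am_f_diff: "\<forall>z>0. Am a f differentiable at z"
    using Am_differentiable[OF a] df_diff by blast
  have Am_Am_f_diff: "Am a (Am a f) differentiable at x"
    using Am_Am_differentiable[OF a x df_diff] ddf_diff x by blast
  note first_order = a x f_diff[rule_format, OF x]
    and second_order = a x f_diff Am_f_diff Am_Am_f_diff
  show ?thesis
    by (intro conjI commutator_Nop_Ap[OF first_order] commutator_Am_Ap[OF first_order]
        commutator_Nop_Am[OF a x Am_f_diff[rule_format, OF x]]
        commutator_Nop_Bp[OF a f_diff[rule_format, OF x]]
        commutator_Am_Bp[OF f_diff[rule_format, OF x]]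
        commutator_Nop_Bm[OF second_order] commutator_Bm_Bp[OF second_order]
        commutator_Ap_Bm[OF second_order] commutator_Am_Bm[OF second_order])
      (simp_all add: commutator_def Mop_def Ap_eq Bp_def)
qed

end
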